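(* Let $E$ be a finite-dimensional real vector space of dimension $p$ with dual $E^{*}$, and let $h$ be a generalized affine function on $E$ that is finite at at least one point. Represent $h$ as in the context by linearly independent $\eta_1,\dots,\eta_j\in E^{*}$ and scalars $\delta_1,\dots,\delta_j$, and extend $\eta_1,\dots,\eta_j$ to a basis $\eta_1,\dots,\eta_p$ of $E^{*}$. Suppose $h_n$ is a sequence of (real-valued) affine functions on $E$ converging pointwise to $h$. Then there are sequences of scalars $a_n$ and $b_{i,n}$ such that $$h_n(y)=a_n+\sum_{i=1}^{j}b_{i,n}\big(\langle y,\eta_i\rangle-\delta_i\big)+\sum_{i=j+1}^{p}b_{i,n}\langle y,\eta_i\rangle,\qquad y\in E,$$ and, as $n\to\infty$: (a) $b_{i,n}\to\infty$ for $1\le i\le j$; (b) $b_{i,n}/b_{i-1,n}\to0$ for $2\le i\le j$; (c) $b_{i,n}$ converges for $i>j$; (d) $a_n$ converges.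
   Context: A generalized affine function is a function $E\to\mathbb{R}\cup\{\pm\infty\}$ that is both convex and concave. Representation: linearly independent $\eta_1,\dots,\eta_j\in E^{*}$ ($j\ge0$) and scalars $\delta_i$, with $H_0=E$, $H_i=\{y\in H_{i-1}:\langle y,\eta_i\rangle=\delta_i\}$, $C_i^{+}=\{y\in H_{i-1}:\langle y,\eta_i\rangle>\delta_i\}$, $C_i^{-}=\{y\in H_{i-1}:\langle y,\eta_i\rangle<\delta_i\}$, all nonempty, such that $h=+\infty$ on each $C_i^{+}$, $h=-\infty$ on each $C_i^{-}$, and $h$ is affine or constant (possibly $\pm\infty$) on $H_j$ (every generalized affine function has such a representation). Empty sums are zero. *)

theory Defs
  imports "HOL-Analysis.Analysis"
begin

definition ereal_convex_fun :: "('a::real_vector \<Rightarrow> ereal) \<Rightarrow> bool" where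
  "ereal_convex_fun h \<longleftrightarrow> convex {(x, t::real). h x \<le> ereal t}"

definition ereal_concave_fun :: "('a::real_vector \<Rightarrow> ereal) \<Rightarrow> bool" where
  "ereal_concave_fun h \<longleftrightarrow> convex {(x, t::real). ereal t \<le> h x}"

definition generalized_affine :: "('a::real_vector \<Rightarrow> ereal) \<Rightarrow> bool" where
  "generalized_affine h \<longleftrightarrow> ereal_convex_fun h \<and> ereal_concave_fun h"

text \<open>The flats \<open>H_i\<close> and open half-flats \<open>C_i^+\<close>, \<open>C_i^-\<close> of the representation;
  the dual pairing \<open>\<langle>y,\<eta>\<rangle>\<close> is the inner product \<open>y \<bullet> \<eta>\<close>.\<close>

definition Hflat :: "(nat \<Rightarrow> 'a::real_inner) \<Rightarrow> (nat \<Rightarrow> real) \<Rightarrow> nat \<Rightarrow> 'a set" where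
  "Hflat \<eta> \<delta> i = {y. \<forall>k\<in>{1..i}. y \<bullet> \<eta> k = \<delta> k}"

definition Cplus :: "(nat \<Rightarrow> 'a::real_inner) \<Rightarrow> (nat \<Rightarrow> real) \<Rightarrow> nat \<Rightarrow> 'a set" where
  "Cplus \<eta> \<delta> i = {y \<in> Hflat \<eta> \<delta> (i - 1). y \<bullet> \<eta> i > \<delta> i}"

definition Cminus :: "(nat \<Rightarrow> 'a::real_inner) \<Rightarrow> (nat \<Rightarrow> real) \<Rightarrow> nat \<Rightarrow> 'a set" where
  "Cminus \<eta> \<delta> i = {y \<in> Hflat \<eta> \<delta> (i - 1). y \<bullet> \<eta> i < \<delta> i}"

end

theory Submission
  imports Defs
begin

text \<open>Write \<open>h\<^sub>n(y) = a\<^sub>n + \<Sum> b\<^sub>i\<^sub>,\<^sub>n t\<^sub>i\<close> in the coordinates \<open>t\<^sub>i = \<langle>y,\<eta>\<^sub>i\<rangle> - \<delta>\<^sub>i\<close> (\<open>i \<le> j\<close>),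
  \<open>t\<^sub>i = \<langle>y,\<eta>\<^sub>i\<rangle>\<close> (\<open>i > j\<close>); since the \<open>\<eta>\<^sub>i\<close> form a basis, every coordinate vector \<open>t\<close> is attained.
  Every finite value of \<open>h\<close> lies on the flat \<open>H\<^sub>j\<close>, so \<open>h\<close> is finite on all of \<open>H\<^sub>j\<close>.
  Evaluating at \<open>t = 0\<close> and at \<open>t = e\<^sub>i\<close> (\<open>i > j\<close>), which lie in \<open>H\<^sub>j\<close>, shows that \<open>a\<^sub>n\<close> and \<open>b\<^sub>i\<^sub>,\<^sub>n\<close>
  converge. The point \<open>t = e\<^sub>i\<close> with \<open>i \<le> j\<close> lies in \<open>C\<^sub>i\<^sup>+\<close>, so \<open>a\<^sub>n + b\<^sub>i\<^sub>,\<^sub>n \<rightarrow> \<infinity>\<close>; and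
  \<open>t = e\<^sub>i - \<epsilon> e\<^sub>i\<^sub>-\<^sub>1\<close> lies in \<open>C\<^sub>i\<^sub>-\<^sub>1\<^sup>-\<close>, so \<open>a\<^sub>n + b\<^sub>i\<^sub>,\<^sub>n - \<epsilon> b\<^sub>i\<^sub>-\<^sub>1\<^sub>,\<^sub>n \<rightarrow> -\<infinity>\<close> for every \<open>\<epsilon> > 0\<close>,
  which forces \<open>b\<^sub>i\<^sub>,\<^sub>n / b\<^sub>i\<^sub>-\<^sub>1\<^sub>,\<^sub>n \<rightarrow> 0\<close>.\<close>

lemma dual_basis_vector_exists:
  fixes \<eta> :: "nat \<Rightarrow> 'a::euclidean_space"
  assumes "p = DIM('a)" "span (\<eta> ` {1..p}) = UNIV" "i \<in> {1..p}"
  shows "\<exists>e. e \<bullet> \<eta> i = 1 \<and> (\<forall>k\<in>{1..p}. k \<noteq> i \<longrightarrow> e \<bullet> \<eta> k = 0)"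
proof -
  define S where "S = \<eta> ` ({1..p} - {i})"
  have "dim S \<le> card S" by (rule dim_le_card) (auto simp: S_def span_superset)
  also have "\<dots> \<le> card ({1..p} - {i})" unfolding S_def by (rule card_image_le) simp
  also have "\<dots> < p" using assms(3) by simp
  finally have "dim S < DIM('a)" using assms(1) by simp
  then obtain x where x: "x \<noteq> 0" "\<And>y. y \<in> span S \<Longrightarrow> orthogonal x y"
    using orthogonal_to_subspace_exists by blast
  have others: "x \<bullet> \<eta> k = 0" if "k \<in> {1..p}" "k \<noteq> i" for k
  proof -
    have "\<eta> k \<in> span S" using that by (auto simp: S_def intro!: span_base)
    then show ?thesis using x by (simp add: orthogonal_def)
  qed
  have "x \<bullet> \<eta> i \<noteq> 0"
  proof
    assume "x \<bullet> \<eta> i = 0"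
    then have "x \<bullet> \<eta> k = 0" if "k \<in> {1..p}" for k
      using others that by (cases "k = i") auto
    then have "orthogonal x y" if "y \<in> \<eta> ` {1..p}" for y
      using that by (auto simp: orthogonal_def)
    then have "orthogonal x x" using orthogonal_to_span[of x "\<eta> ` {1..p}" x] assms(2) by auto
    then show False using x by (simp add: orthogonal_def)
  qed
  then show ?thesis
    using others by (intro exI[of _ "x /\<^sub>R (x \<bullet> \<eta> i)"]) simp
qed

lemma exists_point_with_coordinates:
  fixes \<eta> :: "nat \<Rightarrow> 'a::euclidean_space"
  assumes "p = DIM('a)" "span (\<eta> ` {1..p}) = UNIV"
  shows "\<exists>y. \<forall>k\<in>{1..p}. y \<bullet> \<eta> k = z k"
proof -
  obtain e where e: "\<And>i. i \<in> {1..p} \<Longrightarrow> e i \<bullet> \<eta> i = 1 \<and> (\<forall>k\<in>{1..p}. k \<noteq> i \<longrightarrow> e i \<bullet> \<eta> k = 0)"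
    using dual_basis_vector_exists[OF assms] by metis
  have "(\<Sum>i=1..p. z i *\<^sub>R e i) \<bullet> \<eta> k = z k" if "k \<in> {1..p}" for k
  proof -
    have "(\<Sum>i=1..p. z i *\<^sub>R e i) \<bullet> \<eta> k = (\<Sum>i=1..p. if i = k then z i else 0)"
      unfolding inner_sum_left by (rule sum.cong) (use e that in auto)
    then show ?thesis using that by simp
  qed
  then show ?thesis by blast
qed

lemma linear_in_dual_coordinates:
  fixes \<eta> :: "nat \<Rightarrow> 'a::euclidean_space"
  assumes "linear f" "finite I" "inj_on \<eta> I" "span (\<eta> ` I) = UNIV"
  shows "\<exists>\<beta>. \<forall>y. f y = (\<Sum>k\<in>I. \<beta> k * (y \<bullet> \<eta> k))"
proof -
  define w where "w = adjoint f 1"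
  have fw: "f y = y \<bullet> w" for y
    using adjoint_works[OF assms(1), of y 1] by (simp add: w_def)
  have "w \<in> span (\<eta> ` I)" using assms(4) by simp
  then obtain u where "w = (\<Sum>v\<in>\<eta> ` I. u v *\<^sub>R v)"
    using assms(2) by (auto simp: span_finite)
  also have "\<dots> = (\<Sum>k\<in>I. u (\<eta> k) *\<^sub>R \<eta> k)"
    using sum.reindex[OF assms(3), of "\<lambda>v. u v *\<^sub>R v"] by simp
  finally have "f y = (\<Sum>k\<in>I. u (\<eta> k) * (y \<bullet> \<eta> k))" for y
    by (simp add: fw inner_sum_right)
  then show ?thesis by (intro exI[of _ "\<lambda>k. u (\<eta> k)"]) blast
qed

lemma affine_sequence_in_dual_coordinates:
  fixes \<eta> :: "nat \<Rightarrow> 'a::euclidean_space" and g :: "nat \<Rightarrow> 'a \<Rightarrow> real"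
  assumes "\<forall>n. \<exists>f c. linear f \<and> g n = (\<lambda>y. f y + c)"
    and "finite I" "inj_on \<eta> I" "span (\<eta> ` I) = UNIV"
  shows "\<exists>\<beta> c. \<forall>n y. g n y = c n + (\<Sum>k\<in>I. \<beta> n k * (y \<bullet> \<eta> k))"
proof -
  have "\<exists>\<beta> c. \<forall>y. g n y = c + (\<Sum>k\<in>I. \<beta> k * (y \<bullet> \<eta> k))" for n
  proof -
    obtain f c where f: "linear f" "g n = (\<lambda>y. f y + c)" using assms(1) by blast
    obtain \<beta> where "\<forall>y. f y = (\<Sum>k\<in>I. \<beta> k * (y \<bullet> \<eta> k))"
      using linear_in_dual_coordinates[OF f(1) assms(2-4)] by blast
    then show ?thesis using f(2) by (intro exI[of _ \<beta>] exI[of _ c]) simp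
  qed
  then show ?thesis by metis
qed

lemma sum_split_at:
  fixes f :: "nat \<Rightarrow> 'b::comm_monoid_add"
  assumes "j \<le> p"
  shows "(\<Sum>k=1..p. f k) = (\<Sum>k=1..j. f k) + (\<Sum>k\<in>{j+1..p}. f k)"
  using sum.ub_add_nat[of 1 j f "p - j"] assms by simp

lemma in_Cplus_or_Cminus_if_not_in_Hflat:
  assumes "y \<notin> Hflat \<eta> \<delta> j"
  shows "\<exists>i\<in>{1..j}. y \<in> Cplus \<eta> \<delta> i \<or> y \<in> Cminus \<eta> \<delta> i"
proof -
  have ex: "\<exists>k. k \<in> {1..j} \<and> y \<bullet> \<eta> k \<noteq> \<delta> k" using assms by (auto simp: Hflat_def)
  define m where "m = (LEAST k. k \<in> {1..j} \<and> y \<bullet> \<eta> k \<noteq> \<delta> k)"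
  have m: "m \<in> {1..j}" "y \<bullet> \<eta> m \<noteq> \<delta> m"
    using LeastI_ex[OF ex] unfolding m_def by auto
  have "y \<bullet> \<eta> k = \<delta> k" if "k \<in> {1..m - 1}" for k
    using that m not_less_Least[of k "\<lambda>k. k \<in> {1..j} \<and> y \<bullet> \<eta> k \<noteq> \<delta> k"]
    unfolding m_def[symmetric] by auto
  then have "y \<in> Hflat \<eta> \<delta> (m - 1)" by (auto simp: Hflat_def)
  then have "y \<in> Cplus \<eta> \<delta> m \<or> y \<in> Cminus \<eta> \<delta> m"
    using m(2) by (auto simp: Cplus_def Cminus_def)
  then show ?thesis using m(1) by blast
qed

lemma finite_on_Hflat:
  fixes h :: "'a::real_inner \<Rightarrow> ereal"
  assumes finite_pt: "\<exists>y. h y \<noteq> \<infinity> \<and> h y \<noteq> -\<infinity>"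
    and h_plus: "\<forall>i\<in>{1..j}. \<forall>y\<in>Cplus \<eta> \<delta> i. h y = \<infinity>"
    and h_minus: "\<forall>i\<in>{1..j}. \<forall>y\<in>Cminus \<eta> \<delta> i. h y = -\<infinity>"
    and h_H: "(\<exists>c::ereal. \<forall>y\<in>Hflat \<eta> \<delta> j. h y = c)
              \<or> (\<exists>w c. \<forall>y\<in>Hflat \<eta> \<delta> j. h y = ereal (y \<bullet> w + c))"
    and y: "y \<in> Hflat \<eta> \<delta> j"
  shows "\<exists>r. h y = ereal r"
proof -
  obtain y0 where y0: "h y0 \<noteq> \<infinity>" "h y0 \<noteq> -\<infinity>" using finite_pt by blast
  have "y0 \<in> Hflat \<eta> \<delta> j"
    using in_Cplus_or_Cminus_if_not_in_Hflat h_plus h_minus y0 by blast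
  with h_H have "h y \<noteq> \<infinity> \<and> h y \<noteq> -\<infinity>" using y y0 by force
  then show ?thesis by (cases "h y") auto
qed

lemma ratio_tendsto_zero_if_dominated:
  fixes a b c :: "nat \<Rightarrow> real"
  assumes "convergent a"
    and "filterlim b at_top sequentially" "filterlim c at_top sequentially"
    and "\<And>\<epsilon>. \<epsilon> > 0 \<Longrightarrow> filterlim (\<lambda>n. a n + b n - \<epsilon> * c n) at_bot sequentially"
  shows "((\<lambda>n. b n / c n) \<longlonglongrightarrow> 0)"
proof (rule tendstoI)
  fix \<epsilon> :: real assume "\<epsilon> > 0"
  obtain L where "a \<longlonglongrightarrow> L" using assms(1) by (auto simp: convergent_def)
  then have "eventually (\<lambda>n. a n > L - 1) sequentially"
    by (rule order_tendstoD) simp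
  moreover have "eventually (\<lambda>n. a n + b n - \<epsilon> * c n < L - 1) sequentially"
    using assms(4)[OF \<open>\<epsilon> > 0\<close>] by (simp add: filterlim_at_bot_dense)
  moreover have "eventually (\<lambda>n. b n > 0) sequentially" "eventually (\<lambda>n. c n > 0) sequentially"
    using assms(2,3) by (auto simp: filterlim_at_top_dense)
  ultimately show "eventually (\<lambda>n. dist (b n / c n) 0 < \<epsilon>) sequentially"
  proof eventually_elim
    case (elim n)
    then have "b n < \<epsilon> * c n" by linarith
    then show ?case using elim by (simp add: field_simps)
  qed
qed

locale affine_approximation =
  fixes \<eta> :: "nat \<Rightarrow> 'a::real_inner" and \<delta> :: "nat \<Rightarrow> real" and j p :: nat
    and h :: "'a \<Rightarrow> ereal" and hn :: "nat \<Rightarrow> 'a \<Rightarrow> real"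
    and a :: "nat \<Rightarrow> real" and b :: "nat \<Rightarrow> nat \<Rightarrow> real"
  assumes j_le: "j \<le> p"
    and coordinates_surj: "\<exists>y. \<forall>k\<in>{1..p}. y \<bullet> \<eta> k = z k"
    and hn_eq: "hn n y = a n + (\<Sum>i=1..j. b i n * (y \<bullet> \<eta> i - \<delta> i))
                              + (\<Sum>i\<in>{j+1..p}. b i n * (y \<bullet> \<eta> i))"
    and hn_lim: "((\<lambda>n. ereal (hn n y)) \<longlongrightarrow> h y) sequentially"
    and h_plus: "i \<in> {1..j} \<Longrightarrow> y \<in> Cplus \<eta> \<delta> i \<Longrightarrow> h y = \<infinity>"
    and h_minus: "i \<in> {1..j} \<Longrightarrow> y \<in> Cminus \<eta> \<delta> i \<Longrightarrow> h y = -\<infinity>"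
    and h_finite: "y \<in> Hflat \<eta> \<delta> j \<Longrightarrow> \<exists>r. h y = ereal r"
begin

definition point :: "(nat \<Rightarrow> real) \<Rightarrow> 'a" where
  "point t = (SOME y. \<forall>k\<in>{1..p}. y \<bullet> \<eta> k = (if k \<le> j then \<delta> k else 0) + t k)"

lemma inner_point: "k \<in> {1..p} \<Longrightarrow> point t \<bullet> \<eta> k = (if k \<le> j then \<delta> k else 0) + t k"
  using someI_ex[OF coordinates_surj[of "\<lambda>k. (if k \<le> j then \<delta> k else 0) + t k"]]
  unfolding point_def by blast

lemma hn_point: "hn n (point t) = a n + (\<Sum>k=1..p. b k n * t k)"
proof -
  have "(\<Sum>i=1..j. b i n * (point t \<bullet> \<eta> i - \<delta> i)) = (\<Sum>i=1..j. b i n * t i)"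
    by (rule sum.cong) (use j_le in \<open>auto simp: inner_point\<close>)
  moreover have "(\<Sum>i\<in>{j+1..p}. b i n * (point t \<bullet> \<eta> i)) = (\<Sum>i\<in>{j+1..p}. b i n * t i)"
    by (rule sum.cong) (auto simp: inner_point)
  ultimately show ?thesis
    unfolding hn_eq sum_split_at[OF j_le, of "\<lambda>k. b k n * t k"] by simp
qed

definition unit_coord :: "nat \<Rightarrow> nat \<Rightarrow> real" where
  "unit_coord i = (\<lambda>k. if k = i then 1 else 0)"

lemma sum_mult_unit_coord:
  assumes "i \<in> {1..p}"
  shows "(\<Sum>k=1..p. b k n * unit_coord i k) = b i n"
proof -
  have "(\<Sum>k=1..p. b k n * unit_coord i k) = (\<Sum>k=1..p. if k = i then b k n else 0)"
    by (rule sum.cong) (auto simp: unit_coord_def)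
  then show ?thesis using assms by simp
qed

lemma hn_point_unit_coord: "i \<in> {1..p} \<Longrightarrow> hn n (point (unit_coord i)) = a n + b i n"
  using sum_mult_unit_coord by (simp add: hn_point)

lemma point_in_Hflat: "(\<And>k. k \<in> {1..j} \<Longrightarrow> t k = 0) \<Longrightarrow> point t \<in> Hflat \<eta> \<delta> j"
  using j_le by (auto simp: Hflat_def inner_point)

lemma point_in_Cplus:
  assumes "i \<in> {1..j}" "\<And>k. k \<in> {1..<i} \<Longrightarrow> t k = 0" "t i > 0"
  shows "point t \<in> Cplus \<eta> \<delta> i"
  using assms j_le by (auto simp: Cplus_def Hflat_def inner_point)

lemma point_in_Cminus:
  assumes "i \<in> {1..j}" "\<And>k. k \<in> {1..<i} \<Longrightarrow> t k = 0" "t i < 0"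
  shows "point t \<in> Cminus \<eta> \<delta> i"
  using assms j_le by (auto simp: Cminus_def Hflat_def inner_point)

lemma hn_point_tendsto_finite:
  assumes "\<And>k. k \<in> {1..j} \<Longrightarrow> t k = 0"
  shows "\<exists>r. (\<lambda>n. hn n (point t)) \<longlonglongrightarrow> r"
proof -
  obtain r where "h (point t) = ereal r"
    using h_finite point_in_Hflat assms by blast
  then show ?thesis using hn_lim[of "point t"] by auto
qed

lemma convergent_offset: "convergent a"
  using hn_point_tendsto_finite[of "\<lambda>_. 0"] by (simp add: hn_point convergent_def)

lemma convergent_free_coefficient:
  assumes i: "i \<in> {j+1..p}"
  shows "convergent (\<lambda>n. b i n)"
proof -
  have "\<exists>r. (\<lambda>n. hn n (point (unit_coord i))) \<longlonglongrightarrow> r"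
    using i by (intro hn_point_tendsto_finite) (auto simp: unit_coord_def)
  then obtain r where "(\<lambda>n. a n + b i n) \<longlonglongrightarrow> r"
    using i j_le by (auto simp: hn_point_unit_coord)
  moreover obtain L where "a \<longlonglongrightarrow> L" using convergent_offset by (auto simp: convergent_def)
  ultimately have "(\<lambda>n. b i n) \<longlonglongrightarrow> r - L" using tendsto_diff by fastforce
  then show ?thesis by (auto simp: convergent_def)
qed

lemma coefficient_tendsto_at_top:
  assumes i: "i \<in> {1..j}"
  shows "filterlim (\<lambda>n. b i n) at_top sequentially"
proof -
  have "h (point (unit_coord i)) = \<infinity>"
    using i by (intro h_plus point_in_Cplus) (auto simp: unit_coord_def)
  then have "filterlim (\<lambda>n. a n + b i n) at_top sequentially"
    using hn_lim[of "point (unit_coord i)"] i j_le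
    by (simp add: hn_point_unit_coord tendsto_PInfty_eq_at_top)
  moreover obtain L where "a \<longlonglongrightarrow> L" using convergent_offset by (auto simp: convergent_def)
  ultimately show ?thesis using filterlim_tendsto_add_at_top[OF tendsto_minus] by fastforce
qed

lemma coefficient_ratio_tendsto_zero:
  assumes i: "i \<in> {2..j}"
  shows "((\<lambda>n. b i n / b (i - 1) n) \<longlongrightarrow> 0) sequentially"
proof (rule ratio_tendsto_zero_if_dominated)
  have "i - 1 \<in> {1..j}" using i by auto
  then show "filterlim (\<lambda>n. b i n) at_top sequentially" "filterlim (\<lambda>n. b (i - 1) n) at_top sequentially"
    using i by (auto intro!: coefficient_tendsto_at_top)
next
  fix \<epsilon> :: real assume "\<epsilon> > 0"
  define t where "t = (\<lambda>k. unit_coord i k - \<epsilon> * unit_coord (i - 1) k)"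
  have "h (point t) = -\<infinity>"
    using i \<open>\<epsilon> > 0\<close> by (intro h_minus[of "i - 1"] point_in_Cminus) (auto simp: t_def unit_coord_def)
  moreover have "hn n (point t) = a n + b i n - \<epsilon> * b (i - 1) n" for n
  proof -
    have "(\<Sum>k=1..p. b k n * t k)
        = (\<Sum>k=1..p. b k n * unit_coord i k) - \<epsilon> * (\<Sum>k=1..p. b k n * unit_coord (i - 1) k)"
      by (simp add: t_def algebra_simps sum_subtractf sum_distrib_left)
    also have "\<dots> = b i n - \<epsilon> * b (i - 1) n"
    proof -
      have "i \<in> {1..p}" "i - 1 \<in> {1..p}" using i j_le by auto
      then show ?thesis using sum_mult_unit_coord by presburger
    qed
    finally show ?thesis by (simp add: hn_point)
  qed
  ultimately show "filterlim (\<lambda>n. a n + b i n - \<epsilon> * b (i - 1) n) at_bot sequentially"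
    using hn_lim[of "point t"] by (simp add: tendsto_MInfty filterlim_at_bot_dense)
qed (fact convergent_offset)

end

theorem lemma1:
  fixes h :: "'a::euclidean_space \<Rightarrow> ereal"
    and \<eta> :: "nat \<Rightarrow> 'a" and \<delta> :: "nat \<Rightarrow> real"
    and j p :: nat
    and hn :: "nat \<Rightarrow> 'a \<Rightarrow> real"
  assumes gaff: "generalized_affine h"
    and finite_pt: "\<exists>y. h y \<noteq> \<infinity> \<and> h y \<noteq> -\<infinity>"
    and p_def: "p = DIM('a)"
    and j_le: "j \<le> p"
    and indep_j: "independent (\<eta> ` {1..j})" and inj_j: "inj_on \<eta> {1..j}"
    and Cp_ne: "\<forall>i\<in>{1..j}. Cplus \<eta> \<delta> i \<noteq> {}"
    and Cm_ne: "\<forall>i\<in>{1..j}. Cminus \<eta> \<delta> i \<noteq> {}"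
    and h_plus: "\<forall>i\<in>{1..j}. \<forall>y\<in>Cplus \<eta> \<delta> i. h y = \<infinity>"
    and h_minus: "\<forall>i\<in>{1..j}. \<forall>y\<in>Cminus \<eta> \<delta> i. h y = -\<infinity>"
    and h_H: "(\<exists>c::ereal. \<forall>y\<in>Hflat \<eta> \<delta> j. h y = c)
              \<or> (\<exists>w c. \<forall>y\<in>Hflat \<eta> \<delta> j. h y = ereal (y \<bullet> w + c))"
    and basis: "independent (\<eta> ` {1..p})" "inj_on \<eta> {1..p}" "span (\<eta> ` {1..p}) = UNIV"
    and hn_affine: "\<forall>n. \<exists>f c. linear f \<and> hn n = (\<lambda>y. f y + c)"
    and hn_lim: "\<forall>y. ((\<lambda>n. ereal (hn n y)) \<longlongrightarrow> h y) sequentially"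
  shows "\<exists>(a :: nat \<Rightarrow> real) (b :: nat \<Rightarrow> nat \<Rightarrow> real).
     (\<forall>n y. hn n y = a n + (\<Sum>i=1..j. b i n * (y \<bullet> \<eta> i - \<delta> i))
                         + (\<Sum>i\<in>{j+1..p}. b i n * (y \<bullet> \<eta> i)))
   \<and> (\<forall>i\<in>{1..j}. filterlim (\<lambda>n. b i n) at_top sequentially)
   \<and> (\<forall>i\<in>{2..j}. ((\<lambda>n. b i n / b (i - 1) n) \<longlongrightarrow> 0) sequentially)
   \<and> (\<forall>i\<in>{j+1..p}. convergent (\<lambda>n. b i n))
   \<and> convergent a"
proof -
  obtain \<beta> c where rep: "\<And>n y. hn n y = c n + (\<Sum>k=1..p. \<beta> n k * (y \<bullet> \<eta> k))"
    using affine_sequence_in_dual_coordinates[OF hn_affine finite_atLeastAtMost basis(2,3)] by blast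
  define a where "a n = c n + (\<Sum>i=1..j. \<beta> n i * \<delta> i)" for n
  define b where "b i n = \<beta> n i" for i n
  have form: "hn n y = a n + (\<Sum>i=1..j. b i n * (y \<bullet> \<eta> i - \<delta> i))
                     + (\<Sum>i\<in>{j+1..p}. b i n * (y \<bullet> \<eta> i))" for n y
    unfolding rep sum_split_at[OF j_le, of "\<lambda>k. \<beta> n k * (y \<bullet> \<eta> k)"]
    by (simp add: a_def b_def right_diff_distrib sum_subtractf)
  then interpret affine_approximation \<eta> \<delta> j p h hn a b
    using j_le exists_point_with_coordinates[OF p_def basis(3)] hn_lim h_plus h_minus
      finite_on_Hflat[OF finite_pt h_plus h_minus h_H]
    by unfold_locales blast+
  show ?thesis
    using form convergent_offset convergent_free_coefficient coefficient_tendsto_at_top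
      coefficient_ratio_tendsto_zero by (intro exI[of _ a] exI[of _ b]) blast
qed

end
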